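(* Let $G=(V,E)$ be a finite, connected, simple graph with at least two vertices and generic weights $(w_x)_{x\in\Sigma}$, $\Sigma=V\cup E$; let $M$ be the ground state and $x\in\Sigma$. Suppose the weight of some $y\in\Sigma$ is increased or decreased by $\varepsilon<F_G(x)$, the resulting weights being generic, and let $\tilde M$ be the ground state for the new weights. Then $x\notin M\,\Delta\,\tilde M$.
   Context: A matching of $G$ is a set $M\subset\Sigma$ such that every vertex either belongs to $M$ or is an endpoint of exactly one edge of $M$, but not both. $H(M)=\sum_{z\in M}w_z$; the ground state is the matching minimising $H$. Weights are generic if no nontrivial integer combination of finitely many weights vanishes. For $x\in\Sigma$, $M_{G,x,1}$ (resp. $M_{G,x,0}$) is the matching of minimal weight among those containing $x$ (resp. not containing $x$). The transition point is $K_{G,x}=H(M_{G,x,0})-H(M_{G,x,1})+w_x$ and the flexibility of $x$ is $F_G(x)=|K_{G,x}-w_x|$; all computed with the original weights. *)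

theory Defs
  imports Complex_Main
begin

definition simple_graph :: "'a set \<Rightarrow> 'a set set \<Rightarrow> bool" where
  "simple_graph V E \<longleftrightarrow> finite V \<and> (\<forall>e\<in>E. e \<subseteq> V \<and> card e = 2)"

definition connected_graph :: "'a set \<Rightarrow> 'a set set \<Rightarrow> bool" where
  "connected_graph V E \<longleftrightarrow>
     (\<forall>u\<in>V. \<forall>v\<in>V. (\<lambda>a b. {a, b} \<in> E)\<^sup>*\<^sup>* u v)"

definition Sigma_set :: "'a set \<Rightarrow> 'a set set \<Rightarrow> ('a + 'a set) set" where
  "Sigma_set V E = Inl ` V \<union> Inr ` E"

fun covers :: "('a + 'a set) \<Rightarrow> 'a \<Rightarrow> bool" where
  "covers (Inl u) v = (u = v)"
| "covers (Inr e) v = (v \<in> e)"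

text \<open>Matching (monomer-dimer covering): every vertex lies in exactly one element of M,
  either as a monomer (the vertex itself) or as an endpoint of an edge of M.\<close>
definition is_matching :: "'a set \<Rightarrow> 'a set set \<Rightarrow> ('a + 'a set) set \<Rightarrow> bool" where
  "is_matching V E M \<longleftrightarrow> M \<subseteq> Sigma_set V E \<and>
     (\<forall>v\<in>V. card {z\<in>M. covers z v} = 1)"

definition H :: "(('a + 'a set) \<Rightarrow> real) \<Rightarrow> ('a + 'a set) set \<Rightarrow> real" where
  "H w M = (\<Sum>z\<in>M. w z)"

definition ground_state :: "'a set \<Rightarrow> 'a set set \<Rightarrow> (('a + 'a set) \<Rightarrow> real)
    \<Rightarrow> ('a + 'a set) set \<Rightarrow> bool" where
  "ground_state V E w M \<longleftrightarrow> is_matching V E M \<and>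
     (\<forall>M'. is_matching V E M' \<longrightarrow> H w M \<le> H w M')"

definition generic :: "'a set \<Rightarrow> 'a set set \<Rightarrow> (('a + 'a set) \<Rightarrow> real) \<Rightarrow> bool" where
  "generic V E w \<longleftrightarrow> (\<forall>c :: ('a + 'a set) \<Rightarrow> int.
      (\<exists>z\<in>Sigma_set V E. c z \<noteq> 0) \<longrightarrow> (\<Sum>z\<in>Sigma_set V E. of_int (c z) * w z) \<noteq> 0)"

definition H_with :: "'a set \<Rightarrow> 'a set set \<Rightarrow> (('a + 'a set) \<Rightarrow> real) \<Rightarrow> ('a + 'a set) \<Rightarrow> real" where
  "H_with V E w x = Min {H w M | M. is_matching V E M \<and> x \<in> M}"

definition H_without :: "'a set \<Rightarrow> 'a set set \<Rightarrow> (('a + 'a set) \<Rightarrow> real) \<Rightarrow> ('a + 'a set) \<Rightarrow> real" where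
  "H_without V E w x = Min {H w M | M. is_matching V E M \<and> x \<notin> M}"

definition transition_point :: "'a set \<Rightarrow> 'a set set \<Rightarrow> (('a + 'a set) \<Rightarrow> real) \<Rightarrow> ('a + 'a set) \<Rightarrow> real" where
  "transition_point V E w x = H_without V E w x - H_with V E w x + w x"

definition flexibility :: "'a set \<Rightarrow> 'a set set \<Rightarrow> (('a + 'a set) \<Rightarrow> real) \<Rightarrow> ('a + 'a set) \<Rightarrow> real" where
  "flexibility V E w x = \<bar>transition_point V E w x - w x\<bar>"

end

theory Submission
  imports Defs
begin

text \<open>
  Let \<open>M\<close> be a ground state and \<open>N\<close> a matching on the other side of \<open>x\<close> (exactly one of \<open>M\<close>,
  \<open>N\<close> contains \<open>x\<close>). Then \<open>M\<close> is optimal on its own side, so the flexibility of \<open>x\<close> is the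
  excess of the best matching on the other side over \<open>M\<close>, hence at most \<open>H(N) - H(M)\<close>.
  Changing one weight by \<open>\<epsilon>\<close> changes every energy by \<open>0\<close> or \<open>\<plusminus>\<epsilon>\<close>, so the new ground
  state \<open>M'\<close> has old energy at most \<open>H(M) + \<epsilon>\<close>. If \<open>x\<close> were in \<open>M \<Delta> M'\<close>, taking
  \<open>N = M'\<close> would give a flexibility at most \<open>\<epsilon>\<close>.
\<close>

lemma finite_Sigma_set:
  assumes "simple_graph V E"
  shows "finite (Sigma_set V E)"
proof -
  have "finite V" and "E \<subseteq> Pow V"
    using assms by (auto simp: simple_graph_def)
  then have "finite E"
    by (meson finite_Pow_iff finite_subset)
  with \<open>finite V\<close> show ?thesis
    by (simp add: Sigma_set_def)
qed

lemma is_matching_finite: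
  assumes "simple_graph V E" and "is_matching V E M"
  shows "finite M"
  using assms finite_Sigma_set by (auto simp: is_matching_def intro: finite_subset)

lemma finite_matching_energies:
  assumes "simple_graph V E"
  shows "finite {H w M | M. is_matching V E M \<and> P M}"
proof -
  have "{H w M | M. is_matching V E M \<and> P M} \<subseteq> H w ` Pow (Sigma_set V E)"
    by (auto simp: is_matching_def)
  then show ?thesis
    using finite_Sigma_set[OF assms] by (meson finite_Pow_iff finite_imageI finite_subset)
qed

lemma H_fun_upd:
  assumes "finite N"
  shows "H (w(y := a)) N = H w N + (if y \<in> N then a - w y else 0)"
proof -
  have "w(y := a) = (\<lambda>z. w z + (if z = y then a - w y else 0))"
    by auto
  then show ?thesis
    using assms by (simp add: H_def sum.distrib)
qed

lemma ground_state_le_Min_matching_energies: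
  assumes "simple_graph V E" and "ground_state V E w M"
    and "is_matching V E N" and "P N"
  shows "H w M \<le> Min {H w K | K. is_matching V E K \<and> P K}"
    and "Min {H w K | K. is_matching V E K \<and> P K} \<le> H w N"
proof -
  let ?energies = "{H w K | K. is_matching V E K \<and> P K}"
  have "finite ?energies"
    using finite_matching_energies[OF assms(1)] .
  moreover have "H w N \<in> ?energies"
    using assms(3,4) by blast
  moreover have "\<forall>e\<in>?energies. H w M \<le> e"
    using assms(2) by (auto simp: ground_state_def)
  ultimately show "H w M \<le> Min ?energies" and "Min ?energies \<le> H w N"
    by (blast intro: Min.boundedI, simp)
qed

lemma flexibility_le_energy_gap:
  assumes "simple_graph V E" and "ground_state V E w M"
    and "is_matching V E N" and "x \<in> M \<longleftrightarrow> x \<notin> N"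
  shows "flexibility V E w x \<le> H w N - H w M"
proof -
  have "is_matching V E M"
    using assms(2) by (simp add: ground_state_def)
  note bounds = ground_state_le_Min_matching_energies[OF assms(1,2)]
  show ?thesis
  proof (cases "x \<in> M")
    case True
    then have "H_with V E w x = H w M"
      and "H w M \<le> H_without V E w x" "H_without V E w x \<le> H w N"
      using bounds[OF \<open>is_matching V E M\<close>, of "\<lambda>K. x \<in> K"]
        bounds[OF assms(3), of "\<lambda>K. x \<notin> K"] assms(4)
      by (auto simp: H_with_def H_without_def)
    then show ?thesis
      by (simp add: flexibility_def transition_point_def)
  next
    case False
    then have "H_without V E w x = H w M"
      and "H w M \<le> H_with V E w x" "H_with V E w x \<le> H w N"
      using bounds[OF \<open>is_matching V E M\<close>, of "\<lambda>K. x \<notin> K"]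
        bounds[OF assms(3), of "\<lambda>K. x \<in> K"] assms(4)
      by (auto simp: H_with_def H_without_def)
    then show ?thesis
      by (simp add: flexibility_def transition_point_def)
  qed
qed

lemma ground_state_energy_under_perturbation:
  assumes "simple_graph V E" and "ground_state V E w M"
    and "ground_state V E (w(y := w y + d)) M'"
  shows "H w M' - H w M \<le> \<bar>d\<bar>"
proof -
  have "is_matching V E M" and "is_matching V E M'"
    using assms(2,3) by (simp_all add: ground_state_def)
  then have "H (w(y := w y + d)) M' \<le> H (w(y := w y + d)) M"
    using assms(3) by (simp add: ground_state_def)
  moreover have "finite M" and "finite M'"
    using assms(1) \<open>is_matching V E M\<close> \<open>is_matching V E M'\<close> by (simp_all add: is_matching_finite)
  ultimately show ?thesis
    by (auto simp: H_fun_upd split: if_splits)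
qed

theorem lemma2p11:
  fixes V :: "'a set" and E :: "'a set set" and w :: "('a + 'a set) \<Rightarrow> real"
    and x y :: "'a + 'a set" and M M' :: "('a + 'a set) set" and \<epsilon> :: real and s :: real
  assumes "simple_graph V E" and "connected_graph V E" and "card V \<ge> 2"
    and "generic V E w"
    and "ground_state V E w M"
    and "x \<in> Sigma_set V E" and "y \<in> Sigma_set V E"
    and "\<epsilon> \<ge> 0" and "\<epsilon> < flexibility V E w x"
    and "s = 1 \<or> s = -1"
    and "generic V E (w(y := w y + s * \<epsilon>))"
    and "ground_state V E (w(y := w y + s * \<epsilon>)) M'"
  shows "x \<notin> (M - M') \<union> (M' - M)"
proof
  assume "x \<in> (M - M') \<union> (M' - M)"
  then have "x \<in> M \<longleftrightarrow> x \<notin> M'"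
    by blast
  moreover have "is_matching V E M'"
    using assms(12) by (simp add: ground_state_def)
  ultimately have "flexibility V E w x \<le> H w M' - H w M"
    using flexibility_le_energy_gap assms(1,5) by blast
  also have "\<dots> \<le> \<bar>s * \<epsilon>\<bar>"
    using ground_state_energy_under_perturbation assms(1,5,12) by blast
  also have "\<dots> = \<epsilon>"
    using assms(8,10) by auto
  finally show False
    using assms(9) by simp
qed

end
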